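(* Let $\mathcal A=\bigcup_{\xi<\kappa}\mathcal A_\xi$ where $(\mathcal A_\xi,\mu_\xi)_{\xi<\kappa}$ satisfy conditions (i)–(iv) below (with $\mathcal A_0,\mu_0$ as in the context being the $0$-th terms and the $\mathcal A_\xi$ increasing). Then $\mathcal A$ carries an almost strictly positive finitely additive probability measure, and the quotient $\mathcal A/\mathrm{fin}$ (by the ideal of finite subsets of $D$) is not $\sigma$-centred. The conditions are: (i) $|\mathcal A_\xi|<\kappa$; (ii) $\mu_\xi$ is an almost strictly positive finitely additive probability measure on $\mathcal A_\xi$; (iii) $\mu_\eta|\mathcal A_\xi=\mu_\xi$ for $\xi<\eta<\kappa$; (iv) for every $J\in\mathcal J$ there is $\varphi\in\omega^J$ with $X_\varphi(\mathcal S^J)\in\mathcal A$ and $D\setminus X_\varphi(\mathcal S^J)$ infinite.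
   Context: $\lambda$ is the product measure on $2^\omega$; $\mathcal E$ the ideal of $A\subseteq 2^\omega$ with $\lambda(\overline A)=0$; $\kappa_0=\mathrm{cov}(\mathcal E)$; $\kappa=\mathrm{cof}[\kappa_0]^{\le\omega}$ (least size of a family of countable subsets of $\kappa_0$ cofinal under inclusion). Fix a countable dense $D\subseteq 2^\omega$ and a bijection $d:\omega\to D$. $\mathcal A_0$ is the subalgebra of $P(D)$ generated by $\{C\cap D: C \text{ clopen}\}$ and the finite subsets of $D$; $\mu_0((C\cap D)\triangle F)=\lambda(C)$ for $C$ clopen, $F$ finite. A finitely additive measure on an algebra $\mathcal B\subseteq P(D)$ is almost strictly positive if it vanishes exactly on the finite members of $\mathcal B$. Fix closed $\lambda$-null $Z_\alpha\subseteq 2^\omega$ ($\alpha<\kappa_0$) covering $2^\omega$, write $Z_\alpha=\bigcap_k C_{\alpha,k}$ with $C_{\alpha,k}$ decreasing clopen, and let $S_\alpha(k)=(C_{\alpha,k}\cap D)\setminus\{d(0),\dots,d(k-1)\}$. $\mathcal J$ is a family of countable subsets of $\kappa_0$ of size $\kappa$ cofinal in $[\kappa_0]^{\le\omega}$; for $J\in\mathcal J$, $\mathcal S^J=\{S_\alpha:\alpha\in J\}$ and $X_\varphi(\mathcal S^J)=\bigcup_{\alpha\in J}S_\alpha(\varphi(\alpha))$ for $\varphi\in\omega^J$. A Boolean algebra is $\sigma$-centred if it is a countable union of centred families (families in which every finite subfamily has nonzero meet) of nonzero elements. *)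

theory Defs
  imports "HOL-Probability.Probability"
begin

text \<open>Cantor space 2^omega is the type nat => bool with the product topology
  (bool carries the discrete = order topology).  lam is the product measure
  of the fair coin measure.\<close>

definition lam :: "(nat \<Rightarrow> bool) measure" where
  "lam = PiM UNIV (\<lambda>_. measure_pmf (bernoulli_pmf (1/2)))"

definition clopen :: "(nat \<Rightarrow> bool) set \<Rightarrow> bool" where
  "clopen C \<longleftrightarrow> open C \<and> closed C"

definition nullE :: "(nat \<Rightarrow> bool) set set" where
  "nullE = {A. closure A \<in> null_sets lam}"

definition gen_algebra :: "'a set \<Rightarrow> 'a set set \<Rightarrow> 'a set set" where
  "gen_algebra \<Omega> G = \<Inter>{B. algebra \<Omega> B \<and> G \<subseteq> B}"

definition A0 :: "(nat \<Rightarrow> bool) set \<Rightarrow> (nat \<Rightarrow> bool) set set" where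
  "A0 D = gen_algebra D ({C \<inter> D | C. clopen C} \<union> {F. finite F \<and> F \<subseteq> D})"

definition fa_prob_measure :: "'a set \<Rightarrow> 'a set set \<Rightarrow> ('a set \<Rightarrow> real) \<Rightarrow> bool" where
  "fa_prob_measure \<Omega> B \<mu> \<longleftrightarrow> algebra \<Omega> B \<and> (\<forall>X\<in>B. 0 \<le> \<mu> X) \<and> \<mu> \<Omega> = 1 \<and>
     (\<forall>X\<in>B. \<forall>Y\<in>B. X \<inter> Y = {} \<longrightarrow> \<mu> (X \<union> Y) = \<mu> X + \<mu> Y)"

definition asp_fa_prob_measure :: "'a set \<Rightarrow> 'a set set \<Rightarrow> ('a set \<Rightarrow> real) \<Rightarrow> bool" where
  "asp_fa_prob_measure \<Omega> B \<mu> \<longleftrightarrow> fa_prob_measure \<Omega> B \<mu> \<and> (\<forall>X\<in>B. \<mu> X = 0 \<longleftrightarrow> finite X)"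

text \<open>B/fin is sigma-centred, stated on representatives: the nonzero elements of B/fin are
  the classes of the infinite members of B, and the meet of finitely many classes is the class
  of the intersection, nonzero iff that intersection is infinite.\<close>
definition sigma_centred_mod_fin :: "'a set set \<Rightarrow> bool" where
  "sigma_centred_mod_fin B \<longleftrightarrow>
     (\<exists>F :: nat \<Rightarrow> 'a set set. (\<Union>n. F n) = {X\<in>B. infinite X} \<and>
        (\<forall>n. \<forall>G. G \<subseteq> F n \<and> finite G \<and> G \<noteq> {} \<longrightarrow> infinite (\<Inter>G)))"

definition S_set :: "(nat \<Rightarrow> bool) set \<Rightarrow> (nat \<Rightarrow> nat \<Rightarrow> bool) \<Rightarrow> ('i \<Rightarrow> nat \<Rightarrow> (nat \<Rightarrow> bool) set)
     \<Rightarrow> 'i \<Rightarrow> nat \<Rightarrow> (nat \<Rightarrow> bool) set" where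
  "S_set D d C \<alpha> k = (C \<alpha> k \<inter> D) - d ` {..<k}"

definition X_phi :: "(nat \<Rightarrow> bool) set \<Rightarrow> (nat \<Rightarrow> nat \<Rightarrow> bool) \<Rightarrow> ('i \<Rightarrow> nat \<Rightarrow> (nat \<Rightarrow> bool) set)
     \<Rightarrow> 'i set \<Rightarrow> ('i \<Rightarrow> nat) \<Rightarrow> (nat \<Rightarrow> bool) set" where
  "X_phi D d C J \<phi> = (\<Union>\<alpha>\<in>J. S_set D d C \<alpha> (\<phi> \<alpha>))"

end

theory Submission
  imports Defs
begin

text \<open>The algebras A \<xi> form a chain, so their union is an algebra on which the compatible
  measures \<mu> \<xi> glue to an almost strictly positive measure.  Now suppose the infinite
  members of the union were covered by countably many centred classes.  By compactness of
  Cantor space each class n has a point x n lying in every closed set that almost contains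
  one of its members.  Choose \<alpha> n with x n \<in> Z (\<alpha> n) and J \<in> JJ containing all \<alpha> n;
  by (iv) some X = X_phi(S^J) has infinite complement D - X, which then lies in some class m.
  For a = \<alpha> m and k = \<phi> a the trace of the clopen set C a k is almost contained in X, so
  its complement almost contains D - X; hence x m \<notin> C a k \<supseteq> Z a, a contradiction.\<close>

lemma compact_UNIV_fun_finite: "compact (UNIV :: ('a \<Rightarrow> 'b::{topological_space, finite}) set)"
proof -
  have "compact_space (euclidean :: 'b topology)"
    by (simp add: compact_space_def finite_imp_compact)
  then have "compact_space (product_topology (\<lambda>_::'a. euclidean :: 'b topology) UNIV)"
    by (simp add: compact_space_product_topology)
  then show ?thesis
    by (simp add: euclidean_product_topology compact_space_def)
qed

definition centred_mod_fin :: "'a set set \<Rightarrow> bool" where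
  "centred_mod_fin F \<longleftrightarrow> (\<forall>G. G \<subseteq> F \<and> finite G \<and> G \<noteq> {} \<longrightarrow> infinite (\<Inter>G))"

lemma sigma_centred_mod_fin_iff:
  "sigma_centred_mod_fin B \<longleftrightarrow>
     (\<exists>F :: nat \<Rightarrow> 'a set set. (\<Union>n. F n) = {X\<in>B. infinite X} \<and> (\<forall>n. centred_mod_fin (F n)))"
  by (simp add: sigma_centred_mod_fin_def centred_mod_fin_def)

text \<open>The closed sets almost containing a member of F have the finite intersection property:
  finitely many of them almost contain an infinite intersection of members of F.\<close>
lemma centred_mod_fin_obtains_point:
  fixes F :: "'a::topological_space set set"
  assumes "compact (UNIV :: 'a set)" and "centred_mod_fin F"
  obtains x where "\<And>U X. closed U \<Longrightarrow> X \<in> F \<Longrightarrow> finite (X - U) \<Longrightarrow> x \<in> U"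
proof -
  define K where "K = {U. closed U \<and> (\<exists>X\<in>F. finite (X - U))}"
  have "UNIV \<inter> \<Inter>K \<noteq> {}"
  proof (rule compact_imp_fip[OF assms(1)])
    show "closed U" if "U \<in> K" for U
      using that by (simp add: K_def)
  next
    fix K' assume K': "finite K'" "K' \<subseteq> K"
    show "UNIV \<inter> \<Inter>K' \<noteq> {}"
    proof (cases "K' = {}")
      case False
      have "\<forall>U\<in>K'. \<exists>X. X \<in> F \<and> finite (X - U)"
        using K' unfolding K_def by blast
      then obtain g where g: "\<And>U. U \<in> K' \<Longrightarrow> g U \<in> F \<and> finite (g U - U)"
        by metis
      have "g ` K' \<subseteq> F" "finite (g ` K')" "g ` K' \<noteq> {}"
        using g K' False by auto
      then have "infinite (\<Inter>(g ` K'))"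
        using assms(2) unfolding centred_mod_fin_def by blast
      moreover have "\<Inter>(g ` K') - \<Inter>K' \<subseteq> (\<Union>U\<in>K'. g U - U)" by blast
      then have "finite (\<Inter>(g ` K') - \<Inter>K')"
        by (rule finite_subset) (use K' g in auto)
      ultimately have "\<Inter>(g ` K') \<inter> \<Inter>K' \<noteq> {}"
        by (metis Diff_triv)
      then show ?thesis
        by blast
    qed simp
  qed
  then obtain x where "x \<in> \<Inter>K"
    by blast
  then show ?thesis
    by (intro that) (auto simp: K_def)
qed

lemma X_phi_almost_contains:
  assumes "\<alpha> \<in> J"
  shows "finite ((C \<alpha> (\<phi> \<alpha>) \<inter> D) - X_phi D d C J \<phi>)"
proof -
  have "(C \<alpha> (\<phi> \<alpha>) \<inter> D) - X_phi D d C J \<phi> \<subseteq> d ` {..<\<phi> \<alpha>}"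
    using assms unfolding X_phi_def S_set_def by blast
  then show ?thesis
    by (rule finite_subset) simp
qed

lemma algebra_UN_directed:
  assumes "I \<noteq> {}" and "\<And>i. i \<in> I \<Longrightarrow> algebra \<Omega> (A i)"
    and directed: "\<And>i j. i \<in> I \<Longrightarrow> j \<in> I \<Longrightarrow> \<exists>k\<in>I. A i \<union> A j \<subseteq> A k"
  shows "algebra \<Omega> (\<Union>i\<in>I. A i)"
proof -
  have alg: "A i \<subseteq> Pow \<Omega>" "{} \<in> A i" "\<forall>X\<in>A i. \<Omega> - X \<in> A i" "\<forall>X\<in>A i. \<forall>Y\<in>A i. X \<union> Y \<in> A i"
    if "i \<in> I" for i
    using assms(2)[OF that] unfolding algebra_iff_Un by blast+
  show ?thesis
    unfolding algebra_iff_Un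
  proof (intro conjI ballI)
    show "(\<Union>i\<in>I. A i) \<subseteq> Pow \<Omega>" "{} \<in> (\<Union>i\<in>I. A i)"
      using alg(1,2) assms(1) by blast+
    show "\<Omega> - X \<in> (\<Union>i\<in>I. A i)" if "X \<in> (\<Union>i\<in>I. A i)" for X
      using that alg(3) by blast
    show "X \<union> Y \<in> (\<Union>i\<in>I. A i)" if XY: "X \<in> (\<Union>i\<in>I. A i)" "Y \<in> (\<Union>i\<in>I. A i)" for X Y
    proof -
      obtain k where "k \<in> I" "X \<in> A k" "Y \<in> A k"
        using XY directed by blast
      then show ?thesis
        using alg(4) by blast
    qed
  qed
qed

lemma asp_fa_prob_measure_UN_directed:
  assumes "I \<noteq> {}" and asp: "\<And>i. i \<in> I \<Longrightarrow> asp_fa_prob_measure \<Omega> (A i) (\<mu> i)"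
    and directed: "\<And>i j. i \<in> I \<Longrightarrow> j \<in> I \<Longrightarrow> \<exists>k\<in>I. A i \<union> A j \<subseteq> A k"
    and compatible: "\<And>i j X. i \<in> I \<Longrightarrow> j \<in> I \<Longrightarrow> X \<in> A i \<Longrightarrow> X \<in> A j \<Longrightarrow> \<mu> i X = \<mu> j X"
  shows "asp_fa_prob_measure \<Omega> (\<Union>i\<in>I. A i) (\<lambda>X. \<mu> (SOME i. i \<in> I \<and> X \<in> A i) X)"
    (is "asp_fa_prob_measure \<Omega> ?U ?\<nu>")
proof -
  have \<nu>: "?\<nu> X = \<mu> i X" if "i \<in> I" "X \<in> A i" for i X
  proof -
    have "\<exists>i. i \<in> I \<and> X \<in> A i"
      using that by blast
    then have "(SOME i. i \<in> I \<and> X \<in> A i) \<in> I \<and> X \<in> A (SOME i. i \<in> I \<and> X \<in> A i)"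
      by (rule someI_ex)
    then show ?thesis
      using compatible that by blast
  qed
  have alg: "algebra \<Omega> (A i)" if "i \<in> I" for i
    using asp[OF that] by (simp add: asp_fa_prob_measure_def fa_prob_measure_def)
  show ?thesis
    unfolding asp_fa_prob_measure_def fa_prob_measure_def
  proof (intro conjI ballI impI)
    show "algebra \<Omega> ?U"
      using assms(1) alg directed by (rule algebra_UN_directed)
  next
    fix X assume "X \<in> ?U"
    then obtain i where "i \<in> I" "X \<in> A i" by blast
    then show "0 \<le> ?\<nu> X" "?\<nu> X = 0 \<longleftrightarrow> finite X"
      using \<nu> asp unfolding asp_fa_prob_measure_def fa_prob_measure_def by auto
  next
    obtain i where "i \<in> I" using assms(1) by blast
    then show "?\<nu> \<Omega> = 1"
      using \<nu> asp alg algebra.top unfolding asp_fa_prob_measure_def fa_prob_measure_def by metis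
  next
    fix X Y assume "X \<in> ?U" "Y \<in> ?U" "X \<inter> Y = {}"
    then obtain k where k: "k \<in> I" "X \<in> A k" "Y \<in> A k"
      using directed by blast
    then have "X \<union> Y \<in> A k"
      using alg[OF k(1)] unfolding algebra_iff_Un by blast
    then show "?\<nu> (X \<union> Y) = ?\<nu> X + ?\<nu> Y"
      using asp[OF k(1)] k \<nu> \<open>X \<inter> Y = {}\<close>
      unfolding asp_fa_prob_measure_def fa_prob_measure_def by simp
  qed
qed

lemma not_sigma_centred_mod_fin:
  fixes C :: "'i \<Rightarrow> nat \<Rightarrow> (nat \<Rightarrow> bool) set"
  assumes "algebra D B"
    and cover: "(\<Union>\<alpha>\<in>I0. \<Inter>k. C \<alpha> k) = UNIV"
    and C_open: "\<And>\<alpha> k. \<alpha> \<in> I0 \<Longrightarrow> open (C \<alpha> k)"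
    and cofinal: "\<And>Y. Y \<subseteq> I0 \<Longrightarrow> countable Y \<Longrightarrow> \<exists>J\<in>JJ. Y \<subseteq> J"
    and X_phi_mem: "\<And>J. J \<in> JJ \<Longrightarrow> \<exists>\<phi>. X_phi D d C J \<phi> \<in> B \<and> infinite (D - X_phi D d C J \<phi>)"
  shows "\<not> sigma_centred_mod_fin B"
proof
  assume "sigma_centred_mod_fin B"
  then have "\<exists>F :: nat \<Rightarrow> _. (\<Union>n. F n) = {X\<in>B. infinite X} \<and> (\<forall>n. centred_mod_fin (F n))"
    by (simp only: sigma_centred_mod_fin_iff)
  then obtain F :: "nat \<Rightarrow> _"
    where F: "(\<Union>n. F n) = {X\<in>B. infinite X}" and centred: "\<forall>n. centred_mod_fin (F n)"
    by blast
  have "\<exists>y. \<forall>U X. closed U \<and> X \<in> F n \<and> finite (X - U) \<longrightarrow> y \<in> U" for n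
    by (rule centred_mod_fin_obtains_point[OF compact_UNIV_fun_finite centred[rule_format, of n]])
      (intro exI allI impI, blast)
  then obtain x where x: "\<And>n U X. closed U \<Longrightarrow> X \<in> F n \<Longrightarrow> finite (X - U) \<Longrightarrow> x n \<in> U"
    by metis
  have "\<exists>\<alpha>\<in>I0. x n \<in> (\<Inter>k. C \<alpha> k)" for n
    using cover by blast
  then obtain a where a: "\<And>n. a n \<in> I0" "\<And>n. x n \<in> (\<Inter>k. C (a n) k)"
    by metis
  have "range a \<subseteq> I0" "countable (range a)"
    using a(1) by auto
  then obtain J where "J \<in> JJ" and aJ: "range a \<subseteq> J"
    using cofinal by meson
  then obtain \<phi> where \<phi>: "X_phi D d C J \<phi> \<in> B" "infinite (D - X_phi D d C J \<phi>)"
    using X_phi_mem by meson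
  then have "D - X_phi D d C J \<phi> \<in> (\<Union>n. F n)"
    using F algebra.compl_sets[OF assms(1)] by simp
  then obtain m where m: "D - X_phi D d C J \<phi> \<in> F m"
    by blast
  let ?U = "- C (a m) (\<phi> (a m))"
  have "finite ((D - X_phi D d C J \<phi>) - ?U)"
    using X_phi_almost_contains[of "a m" J] aJ[THEN subsetD, OF rangeI]
    by (simp add: Diff_eq Int_commute Int_left_commute)
  then have "x m \<in> ?U"
    using x[OF _ m] C_open[OF a(1)] by blast
  then show False
    using a(2) by blast
qed

theorem lemma3p2:
  fixes D :: "(nat \<Rightarrow> bool) set" and d :: "nat \<Rightarrow> nat \<Rightarrow> bool"
    and I0 :: "'i set"  \<comment> \<open>index set of cardinality kappa_0 = cov(E)\<close>
    and Z :: "'i \<Rightarrow> (nat \<Rightarrow> bool) set"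
    and C :: "'i \<Rightarrow> nat \<Rightarrow> (nat \<Rightarrow> bool) set"
    and JJ :: "'i set set"
    and r :: "'k rel"  \<comment> \<open>cardinal well-order of type kappa\<close>
    and z :: 'k
    and A :: "'k \<Rightarrow> (nat \<Rightarrow> bool) set set"
    and \<mu> :: "'k \<Rightarrow> (nat \<Rightarrow> bool) set \<Rightarrow> real"
  assumes D_countable: "countable D" and D_dense: "closure D = UNIV"
    and d_bij: "bij_betw d UNIV D"
    \<comment> \<open>Z covers, closed null sets, with clopen decreasing approximations\<close>
    and Z_closed: "\<forall>\<alpha>\<in>I0. closed (Z \<alpha>)"
    and Z_null: "\<forall>\<alpha>\<in>I0. Z \<alpha> \<in> null_sets lam"
    and Z_cover: "(\<Union>\<alpha>\<in>I0. Z \<alpha>) = UNIV"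
    and C_clopen: "\<forall>\<alpha>\<in>I0. \<forall>k. clopen (C \<alpha> k)"
    and C_decr: "\<forall>\<alpha>\<in>I0. \<forall>k. C \<alpha> (Suc k) \<subseteq> C \<alpha> k"
    and Z_eq: "\<forall>\<alpha>\<in>I0. Z \<alpha> = (\<Inter>k. C \<alpha> k)"
    \<comment> \<open>|I0| = kappa_0 = cov(E)\<close>
    and kappa0_min: "\<forall>F. F \<subseteq> nullE \<and> \<Union>F = UNIV \<longrightarrow> (card_of I0, card_of F) \<in> ordLeq"
    \<comment> \<open>r is a cardinal (initial ordinal) equal to kappa = cof([kappa_0]^{<=omega})\<close>
    and r_card: "Card_order r"
    and kappa_min: "\<forall>F. F \<subseteq> {X. X \<subseteq> I0 \<and> countable X} \<and>
                        (\<forall>Y. Y \<subseteq> I0 \<and> countable Y \<longrightarrow> (\<exists>X\<in>F. Y \<subseteq> X))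
                        \<longrightarrow> (r, card_of F) \<in> ordLeq"
    \<comment> \<open>JJ: cofinal family of countable subsets of I0 of size kappa\<close>
    and JJ_sub: "JJ \<subseteq> {X. X \<subseteq> I0 \<and> countable X}"
    and JJ_cofinal: "\<forall>Y. Y \<subseteq> I0 \<and> countable Y \<longrightarrow> (\<exists>J\<in>JJ. Y \<subseteq> J)"
    and JJ_card: "(card_of JJ, r) \<in> ordIso"
    \<comment> \<open>z is the least element (index 0) of r\<close>
    and z_field: "z \<in> Field r" and z_least: "\<forall>\<xi>\<in>Field r. (z, \<xi>) \<in> r"
    \<comment> \<open>0-th terms\<close>
    and A_zero: "A z = A0 D"
    and mu_zero: "\<forall>C' F. clopen C' \<and> finite F \<and> F \<subseteq> D \<longrightarrow>
                     \<mu> z (((C' \<inter> D) - F) \<union> (F - (C' \<inter> D))) = measure lam C'"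
    \<comment> \<open>increasing\<close>
    and A_incr: "\<forall>\<xi> \<eta>. (\<xi>, \<eta>) \<in> r \<longrightarrow> A \<xi> \<subseteq> A \<eta>"
    \<comment> \<open>(i)\<close>
    and cond_i: "\<forall>\<xi>\<in>Field r. (card_of (A \<xi>), r) \<in> ordLess"
    \<comment> \<open>(ii)\<close>
    and cond_ii: "\<forall>\<xi>\<in>Field r. asp_fa_prob_measure D (A \<xi>) (\<mu> \<xi>)"
    \<comment> \<open>(iii)\<close>
    and cond_iii: "\<forall>\<xi> \<eta>. (\<xi>, \<eta>) \<in> r \<and> \<xi> \<noteq> \<eta> \<longrightarrow> (\<forall>X\<in>A \<xi>. \<mu> \<eta> X = \<mu> \<xi> X)"
    \<comment> \<open>(iv)\<close>
    and cond_iv: "\<forall>J\<in>JJ. \<exists>\<phi>. X_phi D d C J \<phi> \<in> (\<Union>\<xi>\<in>Field r. A \<xi>) \<and>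
                              infinite (D - X_phi D d C J \<phi>)"
  shows "(\<exists>\<nu>. asp_fa_prob_measure D (\<Union>\<xi>\<in>Field r. A \<xi>) \<nu>) \<and>
         \<not> sigma_centred_mod_fin (\<Union>\<xi>\<in>Field r. A \<xi>)"
proof -
  have total: "(\<xi>, \<eta>) \<in> r \<or> (\<eta>, \<xi>) \<in> r" if "\<xi> \<in> Field r" "\<eta> \<in> Field r" for \<xi> \<eta>
    using wo_rel.TOTALS[of r] card_order_on_well_order_on[OF r_card] that by (simp add: wo_rel_def)
  have directed: "\<exists>\<theta>\<in>Field r. A \<xi> \<union> A \<eta> \<subseteq> A \<theta>" if "\<xi> \<in> Field r" "\<eta> \<in> Field r" for \<xi> \<eta>
    using total[OF that] A_incr that by blast
  have compatible: "\<mu> \<xi> X = \<mu> \<eta> X"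
    if "\<xi> \<in> Field r" "\<eta> \<in> Field r" "X \<in> A \<xi>" "X \<in> A \<eta>" for \<xi> \<eta> X
    using total[OF that(1,2)] cond_iii that(3,4) by (cases "\<xi> = \<eta>") auto
  have nonempty: "Field r \<noteq> {}"
    using z_field by blast
  have algebra: "algebra D (\<Union>\<xi>\<in>Field r. A \<xi>)"
    using cond_ii by (intro algebra_UN_directed[OF nonempty _ directed])
      (simp add: asp_fa_prob_measure_def fa_prob_measure_def)
  have cover: "(\<Union>\<alpha>\<in>I0. \<Inter>k. C \<alpha> k) = UNIV"
    using Z_cover Z_eq by simp
  have "\<not> sigma_centred_mod_fin (\<Union>\<xi>\<in>Field r. A \<xi>)"
  proof (rule not_sigma_centred_mod_fin[OF algebra cover])
    show "open (C \<alpha> k)" if "\<alpha> \<in> I0" for \<alpha> k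
      using C_clopen that by (simp add: clopen_def)
    show "\<exists>J\<in>JJ. Y \<subseteq> J" if "Y \<subseteq> I0" "countable Y" for Y
      using JJ_cofinal that by blast
    show "\<exists>\<phi>. X_phi D d C J \<phi> \<in> (\<Union>\<xi>\<in>Field r. A \<xi>) \<and> infinite (D - X_phi D d C J \<phi>)"
      if "J \<in> JJ" for J
      using cond_iv that by blast
  qed
  then show ?thesis
    using asp_fa_prob_measure_UN_directed[OF nonempty cond_ii[rule_format] directed compatible] by blast
qed

end
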